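(* Let $x=(x_1,x_2,x_3,x_4)\in(0,1)^4$ and $y=(y_1,y_2,y_3,y_4)\in(0,1)^4$, and write $\bar z:=1-z$. Let $$\mathbf M=\begin{pmatrix} x_1y_1 & x_2y_3 & x_3y_2 & x_4y_4\\ x_1\bar y_1 & x_2\bar y_3 & x_3\bar y_2 & x_4\bar y_4\\ \bar x_1 y_1 & \bar x_2 y_3 & \bar x_3 y_2 & \bar x_4 y_4\\ \bar x_1\bar y_1 & \bar x_2\bar y_3 & \bar x_3\bar y_2 & \bar x_4\bar y_4\end{pmatrix},$$ and let $\mathbf p_{\mathrm e}=(p_{\mathrm{CCe}},p_{\mathrm{CDe}},p_{\mathrm{DCe}},p_{\mathrm{DDe}})^{\mathrm T}$ be the unique probability vector with $\mathbf M\mathbf p_{\mathrm e}=\mathbf p_{\mathrm e}$, regarded as a function of $x_1$ (all other variables fixed). Put $\mathbf p_{\mathrm{CC(C)}}=(y_1,\bar y_1,0,0)^{\mathrm T}$ and $\mathbf p_{\mathrm{CC(D)}}=(0,0,y_1,\bar y_1)^{\mathrm T}$. Then the series below converges and $$\frac{\partial \mathbf p_{\mathrm e}}{\partial x_1}=p_{\mathrm{CCe}}\lim_{n\to\infty}\sum_{t=0}^{n}\mathbf M^t\bigl(\mathbf p_{\mathrm{CC(C)}}-\mathbf p_{\mathrm{CC(D)}}\bigr).$$ Consequently, for any payoff vector $\mathbf u=(R,S,T,P)^{\mathrm T}$, the learning dynamics $\dot x_1=x_1\bar x_1\,p_{\mathrm{CCe}}\sum_{t=0}^{\infty}\mathbf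 M^t(\mathbf p_{\mathrm{CC(C)}}-\mathbf p_{\mathrm{CC(D)}})\cdot\mathbf u$ coincide with $\dot x_1=x_1\bar x_1\,\frac{\partial\mathbf p_{\mathrm e}}{\partial x_1}\cdot\mathbf u$.
   Context: Setting: iterated two-player prisoner's dilemma with memory-one strategies. The states of one round are ordered CC, CD, DC, DD (own action first, opponent's second, from player $x$'s viewpoint). $x_i$ (resp. $y_i$) is the probability that player $x$ (resp. the opponent $y$) cooperates when the previous round's outcome, from its own viewpoint, was the $i$-th state. $\mathbf M$ is the Markov transition matrix of the outcome distribution (column-stochastic, $\mathbf p'=\mathbf M\mathbf p$), and $\mathbf p_{\mathrm e}$ its stationary distribution. *)

theory Defs
  imports "HOL-Analysis.Analysis"
begin

text \<open>States are indexed 0 = CC, 1 = CD, 2 = DC, 3 = DD (own action first).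
  Strategies x, y :: nat \<Rightarrow> real, with x 0, ..., x 3 standing for x_1, ..., x_4.
  Vectors are nat \<Rightarrow> real (indices 0..3), matrices nat \<Rightarrow> nat \<Rightarrow> real (row, column).\<close>

definition opp_state :: "nat \<Rightarrow> nat" where
  "opp_state j = (if j = 1 then 2 else if j = 2 then 1 else j)"

definition trans_mat :: "(nat \<Rightarrow> real) \<Rightarrow> (nat \<Rightarrow> real) \<Rightarrow> nat \<Rightarrow> nat \<Rightarrow> real" where
  "trans_mat x y i j =
     (let a = x j; b = y (opp_state j) in
      if i = 0 then a * b
      else if i = 1 then a * (1 - b)
      else if i = 2 then (1 - a) * b
      else if i = 3 then (1 - a) * (1 - b)
      else 0)"

definition mat_vec :: "(nat \<Rightarrow> nat \<Rightarrow> real) \<Rightarrow> (nat \<Rightarrow> real) \<Rightarrow> nat \<Rightarrow> real" where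
  "mat_vec A v = (\<lambda>i. \<Sum>j<4. A i j * v j)"

primrec mat_pow_vec :: "(nat \<Rightarrow> nat \<Rightarrow> real) \<Rightarrow> nat \<Rightarrow> (nat \<Rightarrow> real) \<Rightarrow> nat \<Rightarrow> real" where
  "mat_pow_vec A 0 v = v"
| "mat_pow_vec A (Suc t) v = mat_vec A (mat_pow_vec A t v)"

definition prob_vec :: "(nat \<Rightarrow> real) \<Rightarrow> bool" where
  "prob_vec p \<longleftrightarrow> (\<forall>i<4. p i \<ge> 0) \<and> (\<Sum>i<4. p i) = 1 \<and> (\<forall>i\<ge>4. p i = 0)"

definition stat_dist :: "(nat \<Rightarrow> real) \<Rightarrow> (nat \<Rightarrow> real) \<Rightarrow> nat \<Rightarrow> real" where
  "stat_dist x y = (THE p. prob_vec p \<and> (\<forall>i<4. mat_vec (trans_mat x y) p i = p i))"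

definition p_CCC :: "(nat \<Rightarrow> real) \<Rightarrow> nat \<Rightarrow> real" where
  "p_CCC y i = (if i = 0 then y 0 else if i = 1 then 1 - y 0 else 0)"

definition p_CCD :: "(nat \<Rightarrow> real) \<Rightarrow> nat \<Rightarrow> real" where
  "p_CCD y i = (if i = 2 then y 0 else if i = 3 then 1 - y 0 else 0)"

end

theory Submission
  imports Defs
begin

text \<open>Since \<open>M\<close> is column-stochastic with positive entries, it contracts the \<open>\<ell>\<^sub>1\<close>-norm of
  zero-sum vectors by a fixed factor \<open>c < 1\<close>. Hence the Neumann series
  \<open>s = \<Sum>\<^sub>t M\<^sup>t d\<close> of the zero-sum vector \<open>d = p_CC(C) - p_CC(D)\<close> converges, solves
  \<open>(I - M) s = d\<close>, and the stationary distribution is unique. Changing \<open>x\<^sub>1\<close> to \<open>a\<close> alters only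
  the first column of \<open>M\<close>, by \<open>(a - x\<^sub>1) d\<close>; comparing the stationary equations of the two
  matrices and using uniqueness of zero-sum fixed points gives the exact identity
  \<open>p_e(a) = p_e(x\<^sub>1) + (a - x\<^sub>1) p_CCe(a) s\<close>. Solving its first component for \<open>p_CCe(a)\<close> makes
  \<open>p_e(a)\<close> an explicit rational function of \<open>a\<close> with derivative \<open>p_CCe(x\<^sub>1) s\<close> at \<open>x\<^sub>1\<close>.\<close>

definition l1_norm :: "(nat \<Rightarrow> real) \<Rightarrow> real" where
  "l1_norm v = (\<Sum>i<4. \<bar>v i\<bar>)"

lemma l1_norm_nonneg: "0 \<le> l1_norm v"
  unfolding l1_norm_def by (auto intro: sum_nonneg)

lemma abs_le_l1_norm: "i < 4 \<Longrightarrow> \<bar>v i\<bar> \<le> l1_norm v"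
  unfolding l1_norm_def by (rule member_le_sum) auto

lemma mat_vec_cong: "(\<And>j. j < 4 \<Longrightarrow> u j = v j) \<Longrightarrow> mat_vec A u = mat_vec A v"
  unfolding mat_vec_def by (intro ext sum.cong) auto

lemma mat_vec_diff: "mat_vec A (\<lambda>k. u k - v k) i = mat_vec A u i - mat_vec A v i"
  by (simp add: mat_vec_def right_diff_distrib sum_subtractf)

lemma mat_pow_vec_diff:
  "mat_pow_vec A t (\<lambda>k. u k - v k) i = mat_pow_vec A t u i - mat_pow_vec A t v i"
  by (induction t arbitrary: i) (simp_all add: mat_vec_def right_diff_distrib sum_subtractf)

lemma mat_vec_scale: "mat_vec A (\<lambda>k. c * v k) i = c * mat_vec A v i"
  by (simp add: mat_vec_def sum_distrib_left algebra_simps)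

lemma mat_pow_vec_Suc': "mat_pow_vec A t (mat_vec A v) = mat_pow_vec A (Suc t) v"
  by (induction t) auto

definition neumann_sum :: "(nat \<Rightarrow> nat \<Rightarrow> real) \<Rightarrow> (nat \<Rightarrow> real) \<Rightarrow> nat \<Rightarrow> real" where
  "neumann_sum A v i = (\<Sum>t. mat_pow_vec A t v i)"

definition stationary :: "(nat \<Rightarrow> nat \<Rightarrow> real) \<Rightarrow> (nat \<Rightarrow> real) \<Rightarrow> bool" where
  "stationary A p \<longleftrightarrow> prob_vec p \<and> (\<forall>i<4. mat_vec A p i = p i)"

locale positive_stochastic =
  fixes A :: "nat \<Rightarrow> nat \<Rightarrow> real"
  assumes entry_pos: "\<And>i j. i < 4 \<Longrightarrow> j < 4 \<Longrightarrow> 0 < A i j"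
    and column_sum: "\<And>j. j < 4 \<Longrightarrow> (\<Sum>i<4. A i j) = 1"
begin

lemma sum_mat_vec: "(\<Sum>i<4. mat_vec A v i) = (\<Sum>j<4. v j)"
proof -
  have "(\<Sum>i<4. mat_vec A v i) = (\<Sum>j<4. (\<Sum>i<4. A i j) * v j)"
    unfolding mat_vec_def by (subst sum.swap) (simp add: sum_distrib_right)
  also have "\<dots> = (\<Sum>j<4. v j)" by (intro sum.cong) (auto simp: column_sum)
  finally show ?thesis .
qed

lemma sum_mat_pow_vec: "(\<Sum>i<4. mat_pow_vec A t v i) = (\<Sum>j<4. v j)"
  by (induction t) (auto simp: sum_mat_vec)

lemma mat_pow_vec_nonneg:
  "(\<And>j. j < 4 \<Longrightarrow> 0 \<le> v j) \<Longrightarrow> i < 4 \<Longrightarrow> 0 \<le> mat_pow_vec A t v i"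
proof (induction t arbitrary: i)
  case (Suc t)
  have "0 \<le> A i j" if "j < 4" for j
    using entry_pos[OF Suc(3) that] by simp
  with Suc show ?case by (auto simp: mat_vec_def intro!: sum_nonneg)
qed simp

text \<open>Subtracting \<open>e\<close> from every entry does not change \<open>A v\<close> when \<open>\<Sum> v = 0\<close>, and leaves a
  nonnegative matrix with column sums \<open>1 - 4 e\<close>.\<close>
lemma l1_norm_mat_vec_le:
  assumes "(\<Sum>j<4. v j) = 0" and e: "\<And>i j. i < 4 \<Longrightarrow> j < 4 \<Longrightarrow> e \<le> A i j"
  shows "l1_norm (mat_vec A v) \<le> (1 - 4 * e) * l1_norm v"
proof -
  have "(\<Sum>j<4. (A i j - e) * v j) = mat_vec A v i - e * (\<Sum>j<4. v j)" for i
    by (simp add: mat_vec_def algebra_simps sum_subtractf sum_distrib_left)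
  then have "mat_vec A v i = (\<Sum>j<4. (A i j - e) * v j)" for i
    using assms(1) by simp
  then have row: "\<bar>mat_vec A v i\<bar> \<le> (\<Sum>j<4. (A i j - e) * \<bar>v j\<bar>)" if "i < 4" for i
    using e[OF that] by (auto intro!: order_trans[OF sum_abs] sum_mono simp: abs_mult)
  have "l1_norm (mat_vec A v) \<le> (\<Sum>i<4. \<Sum>j<4. (A i j - e) * \<bar>v j\<bar>)"
    unfolding l1_norm_def by (intro sum_mono row) auto
  also have "\<dots> = (\<Sum>j<4. (\<Sum>i<4. A i j - e) * \<bar>v j\<bar>)"
    by (subst sum.swap) (simp add: sum_distrib_right)
  also have "\<dots> = (1 - 4 * e) * l1_norm v"
    by (simp add: l1_norm_def sum_subtractf column_sum sum_distrib_left)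
  finally show ?thesis .
qed

lemma zero_sum_contraction:
  obtains c where "0 \<le> c" "c < 1"
    "\<And>v. (\<Sum>j<4. v j) = 0 \<Longrightarrow> l1_norm (mat_vec A v) \<le> c * l1_norm v"
proof
  let ?e = "Min ((\<lambda>(i, j). A i j) ` ({..<4} \<times> {..<4}))"
  have e_le: "?e \<le> A i j" if "i < 4" "j < 4" for i j
    using that by (intro Min_le) auto
  have "0 < ?e" using entry_pos by (subst Min_gr_iff) (auto simp: Times_empty lessThan_empty_iff)
  moreover have "(\<Sum>i<4::nat. ?e) \<le> (\<Sum>i<4. A i 0)" by (intro sum_mono e_le) auto
  ultimately show "0 \<le> 1 - 4 * ?e" "1 - 4 * ?e < 1" using column_sum[of 0] by auto
  show "l1_norm (mat_vec A v) \<le> (1 - 4 * ?e) * l1_norm v" if "(\<Sum>j<4. v j) = 0" for v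
    using l1_norm_mat_vec_le[OF that e_le] .
qed

lemma summable_mat_pow_vec:
  assumes "(\<Sum>j<4. v j) = 0" "i < 4"
  shows "summable (\<lambda>t. mat_pow_vec A t v i)"
proof -
  obtain c where c: "0 \<le> c" "c < 1"
    "\<And>v. (\<Sum>j<4. v j) = 0 \<Longrightarrow> l1_norm (mat_vec A v) \<le> c * l1_norm v"
    using zero_sum_contraction by blast
  have decay: "l1_norm (mat_pow_vec A t v) \<le> c ^ t * l1_norm v" for t
  proof (induction t)
    case (Suc t)
    have "l1_norm (mat_pow_vec A (Suc t) v) \<le> c * l1_norm (mat_pow_vec A t v)"
      using c(3) sum_mat_pow_vec[of t v] assms(1) by simp
    also have "\<dots> \<le> c * (c ^ t * l1_norm v)" using Suc c(1) by (rule mult_left_mono)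
    finally show ?case by simp
  qed simp
  show ?thesis
  proof (rule summable_comparison_test)
    show "\<exists>N. \<forall>t\<ge>N. norm (mat_pow_vec A t v i) \<le> c ^ t * l1_norm v"
      using order_trans[OF abs_le_l1_norm[OF assms(2)] decay] by auto
    show "summable (\<lambda>t. c ^ t * l1_norm v)" using c by (intro summable_mult2 summable_geometric) auto
  qed
qed

lemma zero_sum_fixed_point_eq_0:
  assumes "\<And>i. i < 4 \<Longrightarrow> mat_vec A w i = w i" "(\<Sum>j<4. w j) = 0" "i < 4"
  shows "w i = 0"
proof -
  obtain c where c: "c < 1"
    "\<And>v. (\<Sum>j<4. v j) = 0 \<Longrightarrow> l1_norm (mat_vec A v) \<le> c * l1_norm v"
    using zero_sum_contraction by blast
  have "l1_norm (mat_vec A w) = l1_norm w" unfolding l1_norm_def using assms(1) by simp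
  then have "l1_norm w \<le> c * l1_norm w" using c(2)[OF assms(2)] by simp
  then have "(1 - c) * l1_norm w \<le> 0" by (simp add: algebra_simps)
  then have "l1_norm w = 0" using c(1) l1_norm_nonneg[of w] by (simp add: mult_le_0_iff)
  then show ?thesis using abs_le_l1_norm[OF assms(3), of w] by simp
qed

lemma mat_vec_neumann_sum:
  assumes "(\<Sum>j<4. v j) = 0" "i < 4"
  shows "mat_vec A (neumann_sum A v) i = neumann_sum A v i - v i"
proof -
  note summable = summable_mat_pow_vec[OF assms(1)]
  have "mat_vec A (neumann_sum A v) i = (\<Sum>j<4. \<Sum>t. A i j * mat_pow_vec A t v j)"
    unfolding mat_vec_def neumann_sum_def by (intro sum.cong refl suminf_mult[symmetric] summable) auto
  also have "\<dots> = (\<Sum>t. \<Sum>j<4. A i j * mat_pow_vec A t v j)"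
    by (rule suminf_sum[symmetric]) (auto intro!: summable_mult summable)
  also have "\<dots> = (\<Sum>t. mat_pow_vec A (Suc t) v i)"
    by (simp add: mat_vec_def)
  also have "\<dots> = neumann_sum A v i - v i"
    unfolding neumann_sum_def using suminf_split_head[OF summable[OF assms(2)]] by simp
  finally show ?thesis .
qed

lemma sum_neumann_sum:
  assumes "(\<Sum>j<4. v j) = 0"
  shows "(\<Sum>i<4. neumann_sum A v i) = 0"
proof -
  have "(\<Sum>i<4. neumann_sum A v i) = (\<Sum>t. \<Sum>i<4. mat_pow_vec A t v i)"
    unfolding neumann_sum_def by (rule suminf_sum[symmetric]) (auto intro!: summable_mat_pow_vec assms)
  then show ?thesis using sum_mat_pow_vec assms by simp
qed

text \<open>The witness is \<open>e\<^sub>0 + \<Sum>\<^sub>t A\<^sup>t (A e\<^sub>0 - e\<^sub>0)\<close>; its partial sums telescope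
  to \<open>A\<^sup>n e\<^sub>0 \<ge> 0\<close>.\<close>
lemma stationary_exists: "\<exists>p. stationary A p"
proof -
  define e0 :: "nat \<Rightarrow> real" where "e0 = (\<lambda>k. if k = 0 then 1 else 0)"
  define w where "w = (\<lambda>k. mat_vec A e0 k - e0 k)"
  have sum_w: "(\<Sum>j<4. w j) = 0" unfolding w_def by (simp add: sum_subtractf sum_mat_vec)
  define p where "p = (\<lambda>i. if i < 4 then e0 i + neumann_sum A w i else 0)"
  have fixed: "mat_vec A p i = p i" if "i < 4" for i
  proof -
    have "mat_vec A p = mat_vec A (\<lambda>k. e0 k + neumann_sum A w k)"
      by (rule mat_vec_cong) (simp add: p_def)
    then have "mat_vec A p i = mat_vec A e0 i + mat_vec A (neumann_sum A w) i"
      by (simp add: mat_vec_def algebra_simps sum.distrib)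
    then show ?thesis using mat_vec_neumann_sum[OF sum_w that] that by (simp add: p_def w_def)
  qed
  have nonneg: "0 \<le> p i" if "i < 4" for i
  proof -
    have "(\<Sum>t<n. mat_pow_vec A t w i) = mat_pow_vec A n e0 i - e0 i" for n
      unfolding w_def mat_pow_vec_diff mat_pow_vec_Suc' by (subst sum_lessThan_telescope) simp
    moreover have "0 \<le> mat_pow_vec A n e0 i" for n
      using that by (intro mat_pow_vec_nonneg) (auto simp: e0_def)
    moreover have "(\<lambda>n. \<Sum>t<n. mat_pow_vec A t w i) \<longlonglongrightarrow> neumann_sum A w i"
      unfolding neumann_sum_def using summable_mat_pow_vec[OF sum_w that] by (rule summable_LIMSEQ)
    ultimately have "- e0 i \<le> neumann_sum A w i" by (intro LIMSEQ_le_const) auto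
    then show ?thesis using that by (simp add: p_def)
  qed
  have "(\<Sum>i<4. p i) = (\<Sum>i<4. e0 i) + (\<Sum>i<4. neumann_sum A w i)"
    by (simp add: p_def sum.distrib)
  then have "(\<Sum>i<4. p i) = 1" using sum_neumann_sum[OF sum_w] by (simp add: e0_def)
  then have "prob_vec p" using nonneg by (auto simp: prob_vec_def p_def)
  with fixed show ?thesis unfolding stationary_def by blast
qed

lemma stationary_unique:
  assumes "stationary A p" "stationary A q"
  shows "p = q"
proof
  fix i
  show "p i = q i"
  proof (cases "i < 4")
    case True
    have "(\<lambda>k. p k - q k) i = 0"
    proof (rule zero_sum_fixed_point_eq_0[OF _ _ True])
      show "mat_vec A (\<lambda>k. p k - q k) j = p j - q j" if "j < 4" for j
        using assms that by (simp add: stationary_def mat_vec_diff)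
      show "(\<Sum>j<4. p j - q j) = 0"
        using assms by (simp add: stationary_def prob_vec_def sum_subtractf)
    qed
    then show ?thesis by simp
  qed (use assms in \<open>simp add: stationary_def prob_vec_def\<close>)
qed

lemma stationary_The: "stationary A (THE p. stationary A p)"
  using stationary_exists stationary_unique by (metis theI)

text \<open>If \<open>q\<close> is stationary for a matrix whose first column differs from that of \<open>A\<close> by \<open>c d\<close>,
  then \<open>q - p - c q\<^sub>0 \<Sum>\<^sub>t A\<^sup>t d\<close> is a zero-sum fixed point of \<open>A\<close>.\<close>
lemma stationary_first_column_update:
  assumes d: "(\<Sum>j<4. d j) = 0" and p: "stationary A p"
    and q: "prob_vec q" "\<And>i. i < 4 \<Longrightarrow> mat_vec A q i + c * q 0 * d i = q i"
    and i: "i < 4"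
  shows "q i = p i + c * q 0 * neumann_sum A d i"
proof -
  define w where "w = (\<lambda>i. q i - p i - c * q 0 * neumann_sum A d i)"
  have "w i = 0"
  proof (rule zero_sum_fixed_point_eq_0[OF _ _ i])
    show "mat_vec A w j = w j" if "j < 4" for j
    proof -
      have "mat_vec A w j = mat_vec A q j - mat_vec A p j - c * q 0 * mat_vec A (neumann_sum A d) j"
        unfolding w_def by (simp only: mat_vec_diff mat_vec_scale)
      then show ?thesis
        using q(2)[OF that] p mat_vec_neumann_sum[OF d that] that
        by (simp add: w_def stationary_def algebra_simps)
    qed
    have "(\<Sum>j<4. w j) = (\<Sum>j<4. q j) - (\<Sum>j<4. p j) - c * q 0 * (\<Sum>j<4. neumann_sum A d j)"
      by (simp add: w_def sum_subtractf sum_distrib_left)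
    then show "(\<Sum>j<4. w j) = 0"
      using q(1) p sum_neumann_sum[OF d] by (simp add: stationary_def prob_vec_def)
  qed
  then show ?thesis by (simp add: w_def)
qed

end

text \<open>The first equation is linear in \<open>g a\<close>; solving it near \<open>b\<close> turns \<open>f\<close> into a rational
  function of \<open>a\<close>.\<close>
lemma has_real_derivative_resolvent_identity:
  fixes f g :: "real \<Rightarrow> real"
  assumes "\<forall>\<^sub>F a in nhds b. g a = g b + (a - b) * g a * s0"
    and "\<forall>\<^sub>F a in nhds b. f a = f b + (a - b) * g a * s"
  shows "(f has_real_derivative g b * s) (at b)"
proof -
  let ?h = "\<lambda>a. f b + (a - b) * (g b * s / (1 - (a - b) * s0))"
  have "((\<lambda>a. (a - b) * s0) \<longlongrightarrow> (b - b) * s0) (nhds b)"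
    by (intro tendsto_intros filterlim_ident)
  then have "\<forall>\<^sub>F a in nhds b. (a - b) * s0 < 1" by (rule order_tendstoD) simp
  with assms have "\<forall>\<^sub>F a in nhds b. f a = ?h a"
  proof eventually_elim
    case (elim a)
    then have "g a = g b / (1 - (a - b) * s0)" by (simp add: field_simps)
    then show ?case unfolding elim(2) by simp
  qed
  moreover have "(?h has_real_derivative g b * s) (at b)"
    by (auto intro!: derivative_eq_intros)
  ultimately show ?thesis by (subst DERIV_cong_ev) auto
qed

lemma trans_mat_pos:
  assumes "\<forall>i<4. 0 < x i \<and> x i < 1" "\<forall>i<4. 0 < y i \<and> y i < 1" "i < 4" "j < 4"
  shows "0 < trans_mat x y i j"
proof -
  have "opp_state j < 4" using assms(4) by (simp add: opp_state_def)
  then have "0 < x j" "x j < 1" "0 < y (opp_state j)" "y (opp_state j) < 1"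
    using assms by auto
  moreover have "i = 0 \<or> i = 1 \<or> i = 2 \<or> i = 3" using assms(3) by auto
  ultimately show ?thesis by (auto simp: trans_mat_def Let_def)
qed

lemma positive_stochastic_trans_mat:
  assumes "\<forall>i<4. 0 < x i \<and> x i < 1" "\<forall>i<4. 0 < y i \<and> y i < 1"
  shows "positive_stochastic (trans_mat x y)"
proof
  show "0 < trans_mat x y i j" if "i < 4" "j < 4" for i j
    using trans_mat_pos[OF assms that] .
  show "(\<Sum>i<4. trans_mat x y i j) = 1" for j
    by (simp add: eval_nat_numeral trans_mat_def Let_def algebra_simps)
qed

lemma stat_dist_eq_The: "stat_dist x y = (THE p. stationary (trans_mat x y) p)"
  by (simp add: stat_dist_def stationary_def)

lemma stat_dist_stationary:
  assumes "\<forall>i<4. 0 < x i \<and> x i < 1" "\<forall>i<4. 0 < y i \<and> y i < 1"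
  shows "stationary (trans_mat x y) (stat_dist x y)"
proof -
  interpret positive_stochastic "trans_mat x y"
    by (rule positive_stochastic_trans_mat[OF assms])
  show ?thesis unfolding stat_dist_eq_The by (rule stationary_The)
qed

lemma mat_vec_trans_mat_update:
  "mat_vec (trans_mat (x(0 := a)) y) v i =
     mat_vec (trans_mat x y) v i + (a - x 0) * v 0 * (p_CCC y i - p_CCD y i)"
  by (simp add: mat_vec_def eval_nat_numeral trans_mat_def Let_def p_CCC_def p_CCD_def
      opp_state_def algebra_simps)

lemma stat_dist_fun_upd_0:
  assumes x: "\<forall>i<4. 0 < x i \<and> x i < 1" and y: "\<forall>i<4. 0 < y i \<and> y i < 1"
    and a: "0 < a" "a < 1" and i: "i < 4"
  shows "stat_dist (x(0 := a)) y i = stat_dist x y i +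
    (a - x 0) * stat_dist (x(0 := a)) y 0 * neumann_sum (trans_mat x y) (\<lambda>k. p_CCC y k - p_CCD y k) i"
proof -
  interpret positive_stochastic "trans_mat x y" by (rule positive_stochastic_trans_mat[OF x y])
  let ?q = "stat_dist (x(0 := a)) y"
  have q: "stationary (trans_mat (x(0 := a)) y) ?q"
    using x y a by (intro stat_dist_stationary) auto
  then have "mat_vec (trans_mat x y) ?q j + (a - x 0) * ?q 0 * (p_CCC y j - p_CCD y j) = ?q j"
    if "j < 4" for j
    using that unfolding stationary_def mat_vec_trans_mat_update by simp
  moreover have "(\<Sum>j<4. p_CCC y j - p_CCD y j) = 0"
    by (simp add: eval_nat_numeral p_CCC_def p_CCD_def)
  ultimately show ?thesis
    using q stationary_first_column_update[OF _ stat_dist_stationary[OF x y] _ _ i]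
    by (simp add: stationary_def)
qed

theorem mainTheorem1:
  fixes x y :: "nat \<Rightarrow> real"
  assumes "\<forall>i<4. 0 < x i \<and> x i < 1"
      and "\<forall>i<4. 0 < y i \<and> y i < 1"
  shows "(\<forall>i<4.
            summable (\<lambda>t. mat_pow_vec (trans_mat x y) t (\<lambda>k. p_CCC y k - p_CCD y k) i)
          \<and> ((\<lambda>a. stat_dist (x(0 := a)) y i) has_real_derivative
               (stat_dist x y 0 *
                (\<Sum>t. mat_pow_vec (trans_mat x y) t (\<lambda>k. p_CCC y k - p_CCD y k) i))) (at (x 0)))
       \<and> (\<forall>u :: nat \<Rightarrow> real.
            x 0 * (1 - x 0) * stat_dist x y 0 *
              (\<Sum>i<4. (\<Sum>t. mat_pow_vec (trans_mat x y) t (\<lambda>k. p_CCC y k - p_CCD y k) i) * u i)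
          = x 0 * (1 - x 0) *
              (\<Sum>i<4. deriv (\<lambda>a. stat_dist (x(0 := a)) y i) (x 0) * u i))"
proof -
  let ?M = "trans_mat x y" and ?p = "\<lambda>a. stat_dist (x(0 := a)) y"
  define d where "d = (\<lambda>k. p_CCC y k - p_CCD y k)"
  interpret positive_stochastic ?M by (rule positive_stochastic_trans_mat[OF assms])
  have sum_d: "(\<Sum>j<4. d j) = 0" by (simp add: eval_nat_numeral d_def p_CCC_def p_CCD_def)
  have "\<forall>\<^sub>F a in nhds (x 0). a \<in> {0<..<1}"
    using assms(1) by (intro eventually_nhds_in_open) auto
  then have update: "\<forall>\<^sub>F a in nhds (x 0).
      ?p a i = stat_dist x y i + (a - x 0) * ?p a 0 * neumann_sum ?M d i" if "i < 4" for i
    by eventually_elim (use stat_dist_fun_upd_0[OF assms _ _ that] in \<open>auto simp: d_def\<close>)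
  have deriv: "((\<lambda>a. ?p a i) has_real_derivative stat_dist x y 0 * neumann_sum ?M d i) (at (x 0))"
    if "i < 4" for i
    using has_real_derivative_resolvent_identity[where f = "\<lambda>a. ?p a i" and g = "\<lambda>a. ?p a 0"
        and b = "x 0", unfolded fun_upd_triv] update[OF zero_less_numeral] update[OF that] by blast
  then have "deriv (\<lambda>a. ?p a i) (x 0) = stat_dist x y 0 * neumann_sum ?M d i" if "i < 4" for i
    using that by (intro DERIV_imp_deriv)
  then show ?thesis
    using summable_mat_pow_vec[OF sum_d] deriv
    by (simp add: neumann_sum_def d_def sum_distrib_left mult.assoc)
qed

end
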